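(* Let $F$ be a field of characteristic $p>0$ which is algebraic over a finite field and has no field extension of degree $p$. Let $k=p^l$ for some integer $l\ge0$, let $u$ be a positive integer, let $c_1,\dots,c_u\in F$ be distinct, and set $$f_{k,u}(X,Y)=Y^{p^k}-Y+\frac{1}{\prod_{i=1}^u(X-c_i)}.$$ Then for every $a\in F\setminus\{c_1,\dots,c_u\}$ there exists $b\in F$ with $f_{k,u}(a,b)=0$. *)

theory Defs
  imports "HOL-Computational_Algebra.Polynomial" "HOL-Computational_Algebra.Factorial_Ring"
begin

definition is_subfield :: "'a::field set \<Rightarrow> bool" where
  "is_subfield K \<longleftrightarrow> 0 \<in> K \<and> 1 \<in> K \<and>
     (\<forall>x\<in>K. \<forall>y\<in>K. x + y \<in> K \<and> x * y \<in> K) \<and>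
     (\<forall>x\<in>K. - x \<in> K \<and> inverse x \<in> K)"

definition algebraic_over :: "'a::field set \<Rightarrow> 'a \<Rightarrow> bool" where
  "algebraic_over K x \<longleftrightarrow> (\<exists>q::'a poly. q \<noteq> 0 \<and> set (coeffs q) \<subseteq> K \<and> poly q x = 0)"

definition algebraic_over_finite_field :: "'a::field itself \<Rightarrow> bool" where
  "algebraic_over_finite_field _ \<longleftrightarrow>
     (\<exists>K::'a set. finite K \<and> is_subfield K \<and> (\<forall>x. algebraic_over K x))"

(* Every finite extension of degree a prime n
   is simple, so this is the existence of an irreducible polynomial of
   degree n over 'a, whose quotient ring is the extension of degree n. *)
definition has_extension_of_degree :: "'a::field itself \<Rightarrow> nat \<Rightarrow> bool" where
  "has_extension_of_degree _ n \<longleftrightarrow> (\<exists>g::'a poly. irreducible g \<and> degree g = n)"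

end

theory Submission
  imports Defs "HOL-Computational_Algebra.Primes"
begin

text \<open>
  The map \<open>x \<mapsto> x ^ p - x\<close> is onto. Otherwise \<open>X ^ p - X - t\<close> has no root, so it has an
  irreducible factor \<open>A\<close> of degree \<open>d\<close> with \<open>1 < d < p\<close> (degree \<open>p\<close> is excluded by
  hypothesis). The polynomial is invariant under the shifts \<open>X \<mapsto> X + i\<close>, \<open>i < p\<close>, so all
  \<open>A(X + i)\<close> divide it; as a nonconstant polynomial of degree below \<open>p\<close> has no
  nonzero period, these shifts are pairwise coprime, and their product, of degree \<open>p d > p\<close>,
  divides \<open>X ^ p - X - t\<close>.

  The \<open>n\<close>-th iterate of \<open>x \<mapsto> x ^ p - x\<close> is \<open>x \<mapsto> \<Sum>j. c\<^sub>j x ^ p ^ j\<close>, where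
  \<open>\<Sum>j. c\<^sub>j X ^ j = (X - 1) ^ n\<close>; for \<open>n = p ^ l\<close> the freshman's dream gives
  \<open>(X - 1) ^ n = X ^ n - 1\<close>, so \<open>x \<mapsto> x ^ p ^ k - x\<close> is onto as well. Hence only the
  hypothesis on extensions of degree \<open>p\<close> is needed: the value \<open>1 / \<Prod>(a - c\<^sub>i)\<close> is
  irrelevant.
\<close>

lemma of_nat_power_CHAR:
  assumes "prime CHAR('a::comm_semiring_1)"
  shows "(of_nat n :: 'a) ^ CHAR('a) = of_nat n"
proof (induction n)
  case (Suc n)
  have "(of_nat (Suc n) :: 'a) ^ CHAR('a) = 1 ^ CHAR('a) + of_nat n ^ CHAR('a)"
    using freshmans_dream[OF assms refl, of 1 "of_nat n"] by simp
  with Suc show ?case by simp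
qed (use assms prime_gt_0_nat in \<open>simp add: power_0_left\<close>)

lemma coeff_X_minus_1_power_CHAR:
  fixes n j :: nat
  assumes "prime CHAR('a::comm_ring_1)"
  shows "coeff ([:-1, 1:] ^ n) j ^ CHAR('a) = (coeff ([:-1, 1:] ^ n) j :: 'a)"
proof (cases "j \<le> n")
  case True
  have "((-1) ^ (n - j) :: 'a) ^ CHAR('a) = (- (1 ^ CHAR('a))) ^ (n - j)"
    using minus_power_prime_CHAR[OF refl assms, of 1]
    by (simp flip: power_mult add: mult.commute power_mult)
  then show ?thesis
    using True by (simp add: coeff_linear_poly_power power_mult_distrib of_nat_power_CHAR[OF assms])
next
  case False
  then show ?thesis using assms prime_gt_0_nat
    by (simp add: coeff_eq_0 degree_linear_power power_0_left)
qed

lemma funpow_artin_schreier: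
  fixes y :: "'a::comm_ring_1"
  assumes "prime CHAR('a)"
  shows "((\<lambda>x. x ^ CHAR('a) - x) ^^ n) y
           = (\<Sum>j\<le>n. coeff ([:-1, 1:] ^ n) j * y ^ (CHAR('a) ^ j))"
proof (induction n)
  case (Suc n)
  let ?p = "CHAR('a)" and ?g = "[:-1, 1::'a:] ^ n"
  let ?S = "\<Sum>j\<le>n. coeff ?g j * y ^ (?p ^ j)"
  have "?S ^ ?p = (\<Sum>j\<le>n. (coeff ?g j * y ^ (?p ^ j)) ^ ?p)"
    by (rule freshmans_dream_sum[OF assms refl])
  also have "\<dots> = (\<Sum>j\<le>n. coeff ?g j * y ^ (?p ^ Suc j))"
  proof (rule sum.cong[OF refl])
    fix j
    show "(coeff ?g j * y ^ (?p ^ j)) ^ ?p = coeff ?g j * y ^ (?p ^ Suc j)"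
      by (simp add: power_mult_distrib coeff_X_minus_1_power_CHAR[OF assms]
            power_mult[symmetric] mult.commute[of "?p ^ j"])
  qed
  also have "\<dots> = (\<Sum>j\<le>Suc n. coeff (pCons 0 ?g) j * y ^ (?p ^ j))"
    by (simp only: sum.atMost_Suc_shift coeff_pCons_0 coeff_pCons_Suc) simp
  finally have shifted: "?S ^ ?p = (\<Sum>j\<le>Suc n. coeff (pCons 0 ?g) j * y ^ (?p ^ j))" .
  have "?S = (\<Sum>j\<le>Suc n. coeff ?g j * y ^ (?p ^ j))"
    by (simp add: coeff_eq_0 degree_linear_power)
  with shifted have "?S ^ ?p - ?S = (\<Sum>j\<le>Suc n. coeff (pCons 0 ?g - ?g) j * y ^ (?p ^ j))"
    by (simp only: coeff_diff left_diff_distrib sum_subtractf)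
  moreover have "pCons 0 ?g - ?g = [:-1, 1:] ^ Suc n"
    by (simp add: algebra_simps)
  moreover have "((\<lambda>x. x ^ ?p - x) ^^ Suc n) y = ?S ^ ?p - ?S"
    by (simp only: funpow.simps comp_apply Suc.IH)
  ultimately show ?case
    by (simp only:)
qed simp

lemma funpow_artin_schreier_prime_power:
  fixes y :: "'a::comm_ring_1"
  assumes "prime CHAR('a)"
  shows "((\<lambda>x. x ^ CHAR('a) - x) ^^ (CHAR('a) ^ l)) y = y ^ (CHAR('a) ^ CHAR('a) ^ l) - y"
proof -
  let ?m = "CHAR('a) ^ l"
  have m_pos: "?m > 0"
    using assms prime_gt_0_nat by simp
  have "(1 + -1 :: 'a) ^ ?m = 1 ^ ?m + (-1) ^ ?m"
    by (rule freshmans_dream'[OF assms refl])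
  moreover have "(0 :: 'a) ^ ?m = 0"
    using m_pos by (simp only: zero_power)
  ultimately have minus_one: "(-1 :: 'a) ^ ?m = -1"
    by (simp add: eq_neg_iff_add_eq_0 add.commute)
  have "[:-1, 1::'a:] ^ ?m = ([:0, 1:] + [:-1:]) ^ ?m"
    by simp
  also have "\<dots> = [:0, 1:] ^ ?m + [:-1:] ^ ?m"
    by (rule freshmans_dream') (use assms in simp_all)
  finally have "[:-1, 1::'a:] ^ ?m = monom 1 ?m - 1"
    by (simp add: monom_altdef poly_const_pow minus_one one_pCons)
  then show ?thesis
    using m_pos
    by (simp add: funpow_artin_schreier[OF assms] coeff_diff left_diff_distrib sum_subtractf
          coeff_1 if_distrib[of "\<lambda>c. c * _"] sum.delta' cong: if_cong)
qed

lemma euclidean_bezout_exists: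
  fixes a b :: "'a::euclidean_ring"
  shows "\<exists>u v. u * a + v * b dvd a \<and> u * a + v * b dvd b"
proof (induction b arbitrary: a rule: measure_induct_rule[of euclidean_size])
  case (less b a)
  show ?case
  proof (cases "b = 0")
    case True
    then show ?thesis
      by (intro exI[of _ 1] exI[of _ 0]) simp
  next
    case False
    then obtain u v where uv: "u * b + v * (a mod b) dvd b" "u * b + v * (a mod b) dvd a mod b"
      using less mod_size_less by blast
    have "u * b + v * (a mod b) = v * a + (u - v * (a div b)) * b"
      by (simp add: minus_div_mult_eq_mod[symmetric] algebra_simps)
    moreover have "u * b + v * (a mod b) dvd a"
      using uv by (metis div_mult_mod_eq dvd_add dvd_mult)
    ultimately show ?thesis
      using uv(1) by metis
  qed
qed

lemma coprime_iff_bezout: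
  fixes a b :: "'a::euclidean_ring"
  shows "coprime a b \<longleftrightarrow> (\<exists>u v. u * a + v * b = 1)"
proof
  assume "coprime a b"
  obtain u v where "u * a + v * b dvd a" "u * a + v * b dvd b"
    using euclidean_bezout_exists by blast
  with \<open>coprime a b\<close> obtain h where "(u * a + v * b) * h = 1"
    by (metis coprime_common_divisor dvdE)
  then have "(h * u) * a + (h * v) * b = 1"
    by (simp add: algebra_simps)
  then show "\<exists>u v. u * a + v * b = 1"
    by blast
next
  assume "\<exists>u v. u * a + v * b = 1"
  then show "coprime a b"
    by (metis coprimeI dvd_add dvd_mult)
qed

lemma coprime_mult_right_euclidean:
  fixes a b c :: "'a::euclidean_ring"
  assumes "coprime a b" "coprime a c"
  shows "coprime a (b * c)"
proof -
  obtain u v u' v' where "u * a + v * b = 1" "u' * a + v' * c = 1"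
    using assms by (auto simp: coprime_iff_bezout)
  then have "(u * a + v * b) * (u' * a + v' * c) = 1"
    by simp
  then have "(u * u' * a + u * v' * c + v * b * u') * a + (v * v') * (b * c) = 1"
    by (simp add: algebra_simps)
  then show ?thesis
    unfolding coprime_iff_bezout by blast
qed

lemma mult_dvd_if_coprime_euclidean:
  fixes a b n :: "'a::euclidean_ring"
  assumes "coprime a b" "a dvd n" "b dvd n"
  shows "a * b dvd n"
proof -
  obtain u v where "u * a + v * b = 1"
    using assms(1) by (auto simp: coprime_iff_bezout)
  then have "n = u * a * n + v * b * n"
    by (metis distrib_right mult_1)
  moreover have "a * b dvd u * a * n" "a * b dvd v * b * n"
    using assms(2,3) by (auto simp: algebra_simps intro: mult_dvd_mono)
  ultimately show ?thesis
    by (metis dvd_add)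
qed

lemma prod_dvd_if_pairwise_coprime:
  fixes f :: "'b \<Rightarrow> 'a::euclidean_ring"
  assumes "finite I" "\<And>i. i \<in> I \<Longrightarrow> f i dvd n"
    and "\<And>i j. i \<in> I \<Longrightarrow> j \<in> I \<Longrightarrow> i \<noteq> j \<Longrightarrow> coprime (f i) (f j)"
  shows "prod f I dvd n"
  using assms
proof (induction I rule: finite_induct)
  case (insert i I)
  have "coprime (f i) (prod f I)"
    using insert.hyps insert.prems(2)
    by (induction I rule: finite_induct) (auto intro: coprime_mult_right_euclidean)
  with insert show ?case
    by (simp add: mult_dvd_if_coprime_euclidean)
qed simp

lemma irreducible_imp_coprime:
  assumes "irreducible a" "\<not> a dvd b"
  shows "coprime a b"
  using assms by (metis coprimeI dvd_trans irreducibleD')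

lemma irreducible_divisor_exists:
  fixes q :: "'a::field poly"
  assumes "degree q > 0"
  shows "\<exists>a. irreducible a \<and> a dvd q"
  using assms
proof (induction "degree q" arbitrary: q rule: less_induct)
  case less
  then have "q \<noteq> 0"
    by auto
  with less.prems have "\<not> is_unit q"
    by (simp add: is_unit_iff_degree)
  show ?case
  proof (cases "irreducible q")
    case False
    then obtain a b where "q = a * b" "\<not> is_unit a" "\<not> is_unit b"
      using \<open>q \<noteq> 0\<close> \<open>\<not> is_unit q\<close> by (auto simp: irreducible_def)
    moreover from this have "a \<noteq> 0" "b \<noteq> 0"
      using \<open>q \<noteq> 0\<close> by auto
    ultimately have "degree a > 0" "degree a < degree q"
      by (auto simp: is_unit_iff_degree degree_mult_eq)
    then show ?thesis
      using less \<open>q = a * b\<close> by (metis dvd_mult2)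
  qed (use dvd_refl in blast)
qed

lemma poly_root_if_degree_1:
  fixes q :: "'a::field poly"
  assumes "degree q = 1"
  shows "poly q (- coeff q 0 / coeff q 1) = 0"
proof -
  have q: "q = [:coeff q 0, coeff q 1:]"
  proof (rule poly_eqI)
    fix n
    show "coeff q n = coeff [:coeff q 0, coeff q 1:] n"
      using assms coeff_eq_0[of q n] by (cases n; cases "n - 1") auto
  qed
  have "coeff q 1 \<noteq> 0"
    using assms by (metis One_nat_def degree_0 leading_coeff_0_iff zero_neq_one)
  have "poly q (- coeff q 0 / coeff q 1) = coeff q 0 + (- coeff q 0 / coeff q 1) * coeff q 1"
    by (subst q) simp
  with \<open>coeff q 1 \<noteq> 0\<close> show ?thesis
    by simp
qed

lemma pcompose_power_left: "pcompose (r ^ n) q = pcompose r q ^ n"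
  by (induction n) (simp_all add: pcompose_1 pcompose_mult)

lemma pcompose_shift_shift:
  "pcompose (pcompose A [:a, 1:]) [:b, 1:] = pcompose A [:a + b, 1::'a::comm_ring_1:]"
  by (simp add: pcompose_assoc[symmetric] pcompose_pCons add.commute)

lemma degree_pcompose_shift: "degree (pcompose A [:c, 1::'a::idom:]) = degree A"
  by (simp add: degree_pcompose)

lemma pcompose_shift_dvd:
  "A dvd B \<Longrightarrow> pcompose A [:c, 1:] dvd pcompose B [:c, 1::'a::comm_ring_1:]"
  by (auto simp: pcompose_mult elim!: dvdE)

lemma irreducible_pcompose_shift:
  fixes A :: "'a::field poly"
  assumes "irreducible A"
  shows "irreducible (pcompose A [:c, 1:])"
proof (rule irreducibleI)
  have "degree (pcompose A [:c, 1:]) > 0"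
    using assms by (auto simp: degree_pcompose_shift irreducible_def is_unit_iff_degree)
  moreover from this show nonzero: "pcompose A [:c, 1:] \<noteq> 0"
    by auto
  ultimately show "\<not> is_unit (pcompose A [:c, 1:])"
    by (simp add: is_unit_iff_degree)
  fix B C
  assume "pcompose A [:c, 1:] = B * C"
  then have "A = pcompose B [:-c, 1:] * pcompose C [:-c, 1:]"
    by (metis pcompose_mult pcompose_shift_shift add.right_inverse pcompose_idR)
  then have "is_unit (pcompose B [:-c, 1:]) \<or> is_unit (pcompose C [:-c, 1:])"
    using assms irreducibleD by blast
  moreover have "B \<noteq> 0" "C \<noteq> 0"
    using nonzero \<open>pcompose A [:c, 1:] = B * C\<close> by auto
  ultimately show "is_unit B \<or> is_unit C"
    by (auto simp: is_unit_iff_degree degree_pcompose_shift pcompose_eq_0_iff)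
qed

lemma pcompose_shift_eq_if_dvd:
  fixes B :: "'a::field poly"
  assumes "B dvd pcompose B [:c, 1:]"
  shows "pcompose B [:c, 1:] = B"
proof (cases "B = 0")
  case False
  from assms obtain k where k: "pcompose B [:c, 1:] = B * k"
    by (elim dvdE)
  with False have "k \<noteq> 0"
    by (auto simp: pcompose_eq_0_iff)
  with k False have "degree k = 0"
    using degree_pcompose_shift[of B c] by (simp add: degree_mult_eq)
  then obtain \<kappa> where "k = [:\<kappa>:]"
    by (metis degree_eq_zeroE)
  moreover have "lead_coeff B * coeff k 0 = lead_coeff B"
    using arg_cong[OF k, of lead_coeff] \<open>degree k = 0\<close>
    by (simp add: lead_coeff_comp lead_coeff_mult)
  ultimately show ?thesis
    using False k by simp
qed simp

lemma inj_on_of_nat_lessThan_CHAR: "inj_on (of_nat :: nat \<Rightarrow> 'a::ring_1) {..<CHAR('a)}"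
proof -
  have "i = j" if "i \<le> j" "j < CHAR('a)" "(of_nat i :: 'a) = of_nat j" for i j
  proof -
    have "CHAR('a) dvd j - i"
      using that by (simp add: of_nat_eq_0_iff_char_dvd[symmetric] of_nat_diff)
    with that show ?thesis
      by (metis diff_le_self dvd_imp_le le_antisym le_less_trans nat_less_le zero_less_diff)
  qed
  then show ?thesis
    by (metis inj_onI lessThan_iff nat_le_linear)
qed

lemma degree_eq_0_if_pcompose_shift_eq:
  fixes B :: "'a::field poly"
  assumes "pcompose B [:c, 1:] = B" "c \<noteq> 0" "degree B < CHAR('a)"
  shows "degree B = 0"
proof (rule ccontr)
  assume "degree B \<noteq> 0"
  define Q where "Q = B - [:poly B 0:]"
  have degree_Q: "degree Q = degree B"
    using \<open>degree B \<noteq> 0\<close> by (simp add: Q_def diff_conv_add_uminus degree_add_eq_left)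
  then have "Q \<noteq> 0"
    using \<open>degree B \<noteq> 0\<close> by auto
  have "poly B (c + x) = poly B x" for x
    using arg_cong[OF assms(1), of "\<lambda>q. poly q x"] by (simp add: poly_pcompose)
  then have "poly B (of_nat m * c) = poly B 0" for m
    by (induction m) (simp_all add: distrib_right)
  then have "(\<lambda>m. of_nat m * c) ` {..<CHAR('a)} \<subseteq> {x. poly Q x = 0}"
    by (auto simp: Q_def)
  moreover have "inj_on (\<lambda>m. of_nat m * c) {..<CHAR('a)}"
    using inj_on_of_nat_lessThan_CHAR assms(2) by (auto simp: inj_on_def)
  ultimately have "CHAR('a) \<le> card {x. poly Q x = 0}"
    using poly_roots_finite[OF \<open>Q \<noteq> 0\<close>] by (metis card_image card_lessThan card_mono)
  also have "\<dots> \<le> degree Q"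
    using \<open>Q \<noteq> 0\<close> by (rule card_poly_roots_bound)
  finally show False
    using degree_Q assms(3) by simp
qed

lemma coprime_pcompose_shifts:
  fixes A :: "'a::field poly"
  assumes "irreducible A" "degree A < CHAR('a)"
    and "i < CHAR('a)" "j < CHAR('a)" "i \<noteq> j"
  shows "coprime (pcompose A [:of_nat i, 1:]) (pcompose A [:of_nat j, 1:])"
proof (rule irreducible_imp_coprime)
  let ?Ai = "pcompose A [:of_nat i, 1:]" and ?Aj = "pcompose A [:of_nat j, 1:]"
  show "irreducible ?Ai"
    using assms(1) by (rule irreducible_pcompose_shift)
  show "\<not> ?Ai dvd ?Aj"
  proof
    assume "?Ai dvd ?Aj"
    moreover have "?Aj = pcompose ?Ai [:of_nat j - of_nat i, 1:]"
      by (simp add: pcompose_shift_shift)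
    ultimately have "pcompose ?Ai [:of_nat j - of_nat i, 1:] = ?Ai"
      by (metis pcompose_shift_eq_if_dvd)
    moreover have "of_nat j - of_nat i \<noteq> (0 :: 'a)"
      using inj_on_of_nat_lessThan_CHAR assms(3-5) by (auto simp: inj_on_def)
    ultimately have "degree A = 0"
      using assms(2) degree_eq_0_if_pcompose_shift_eq[of ?Ai] by (simp add: degree_pcompose_shift)
    with assms(1) show False
      by (auto simp: irreducible_def is_unit_iff_degree)
  qed
qed

lemma CHAR_mult_degree_le_if_shift_invariant:
  fixes A P :: "'a::field poly"
  assumes "irreducible A" "A dvd P" "P \<noteq> 0" "degree A < CHAR('a)"
    and "\<And>i. pcompose P [:of_nat i, 1:] = P"
  shows "CHAR('a) * degree A \<le> degree P"
proof -
  define shift where "shift i = pcompose A [:of_nat i, 1:]" for i :: nat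
  have "shift i dvd P" for i
    using pcompose_shift_dvd[OF assms(2), of "of_nat i"] assms(5) by (simp add: shift_def)
  moreover have "coprime (shift i) (shift j)" if "i < CHAR('a)" "j < CHAR('a)" "i \<noteq> j" for i j
    using coprime_pcompose_shifts assms(1,4) that by (simp add: shift_def)
  ultimately have "prod shift {..<CHAR('a)} dvd P"
    by (intro prod_dvd_if_pairwise_coprime) auto
  moreover have "shift i \<noteq> 0" for i
    using irreducible_pcompose_shift[OF assms(1), of "of_nat i"] by (auto simp: shift_def)
  then have "degree (prod shift {..<CHAR('a)}) = CHAR('a) * degree A"
    by (simp add: degree_prod_eq_sum_degree shift_def degree_pcompose_shift)
  ultimately show ?thesis
    using dvd_imp_degree_le[OF _ assms(3)] by metis
qed

lemma pcompose_artin_schreier_shift: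
  fixes t c :: "'a::field"
  assumes "prime CHAR('a)" "c ^ CHAR('a) = c"
  shows "pcompose ([:0, 1:] ^ CHAR('a) - [:t, 1:]) [:c, 1:] = [:0, 1:] ^ CHAR('a) - [:t, 1:]"
proof -
  have "[:c, 1:] ^ CHAR('a) = ([:0, 1:] + [:c:]) ^ CHAR('a)"
    by simp
  also have "\<dots> = [:0, 1:] ^ CHAR('a) + [:c:] ^ CHAR('a)"
    by (rule freshmans_dream) (use assms(1) in simp_all)
  also have "[:c:] ^ CHAR('a) = [:c:]"
    using assms(2) by (simp add: poly_const_pow)
  finally show ?thesis
    by (simp add: pcompose_diff pcompose_pCons pcompose_power_left)
qed

lemma artin_schreier_surj:
  fixes t :: "'a::field"
  assumes "CHAR('a) > 0" "\<not> has_extension_of_degree TYPE('a) CHAR('a)"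
  shows "\<exists>b. b ^ CHAR('a) - b = t"
proof (rule ccontr)
  assume no_root: "\<nexists>b. b ^ CHAR('a) - b = t"
  define p where "p = CHAR('a)"
  have "prime p"
    using assms(1) prime_CHAR_semidom p_def by blast
  then have "p \<ge> 2"
    by (rule prime_ge_2_nat)
  define P :: "'a poly" where "P = [:0, 1:] ^ p - [:t, 1:]"
  have "degree P = p"
    using \<open>p \<ge> 2\<close> by (simp add: P_def degree_linear_power diff_conv_add_uminus degree_add_eq_left)
  then have "P \<noteq> 0"
    using \<open>p \<ge> 2\<close> by auto
  obtain A where "irreducible A" "A dvd P"
    using irreducible_divisor_exists[of P] \<open>degree P = p\<close> \<open>p \<ge> 2\<close> by auto
  have "degree A \<le> p"
    using dvd_imp_degree_le[OF \<open>A dvd P\<close> \<open>P \<noteq> 0\<close>] \<open>degree P = p\<close> by simp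
  moreover have "degree A \<noteq> p"
    using assms(2) \<open>irreducible A\<close> by (auto simp: has_extension_of_degree_def p_def)
  moreover have "pcompose P [:of_nat i, 1:] = P" for i
    using \<open>prime p\<close> by (simp add: P_def p_def pcompose_artin_schreier_shift of_nat_power_CHAR)
  ultimately have "p * degree A \<le> p"
    using CHAR_mult_degree_le_if_shift_invariant[OF \<open>irreducible A\<close> \<open>A dvd P\<close> \<open>P \<noteq> 0\<close>]
      \<open>degree P = p\<close> by (simp add: p_def)
  moreover have "degree A > 0"
    using \<open>irreducible A\<close> by (auto simp: irreducible_def is_unit_iff_degree)
  ultimately have "degree A = 1"
    using \<open>p \<ge> 2\<close> by simp
  moreover obtain B where "P = A * B"
    using \<open>A dvd P\<close> by (elim dvdE)
  ultimately obtain x where "poly P x = 0"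
    by (metis poly_root_if_degree_1 poly_mult mult_zero_left)
  then have "x ^ CHAR('a) - x = t"
    by (simp add: P_def p_def poly_power algebra_simps)
  with no_root show False
    by blast
qed

theorem lemma3p1:
  fixes p l k u :: nat and c :: "nat \<Rightarrow> 'a::field" and a :: 'a
  assumes "CHAR('a) = p" and "p > 0"
    and "algebraic_over_finite_field TYPE('a)"
    and "\<not> has_extension_of_degree TYPE('a) p"
    and "k = p ^ l"
    and "u > 0"
    and "inj_on c {1..u}"
    and "a \<notin> c ` {1..u}"
  shows "\<exists>b::'a. b ^ (p ^ k) - b + 1 / (\<Prod>i=1..u. (a - c i)) = 0"
proof -
  have "prime p"
    using assms(1,2) prime_CHAR_semidom by blast
  have "\<exists>x. x ^ p - x = y" for y :: 'a
    using artin_schreier_surj[of y] assms(1,2,4) by simp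
  then have "surj (\<lambda>x::'a. x ^ p - x)"
    unfolding surj_def by metis
  then have "surj ((\<lambda>x::'a. x ^ p - x) ^^ k)"
    by (rule surj_fn)
  then obtain b where b: "- (1 / (\<Prod>i=1..u. (a - c i))) = ((\<lambda>x::'a. x ^ p - x) ^^ k) b"
    by (meson surjD)
  have "((\<lambda>x::'a. x ^ p - x) ^^ k) b = b ^ (p ^ k) - b"
    using funpow_artin_schreier_prime_power[where y = b and l = l] \<open>prime p\<close> by (simp only: assms(1,5))
  with b show ?thesis
    by (metis add.commute neg_eq_iff_add_eq_0)
qed

end
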